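(* Let $\mathcal C$ be an EACP over a field $K$ with a natural basis $\{h_1,\dots,h_n,r\}$ whose multiplication table is $$h_1r=\sum_{j=1}^n a_{1j}h_j+\delta r,\ \ \delta\in\{0,1\},\qquad h_ir=\sum_{j=1}^n a_{ij}h_j\ \ (2\le i\le n),$$ (together with $h_ih_j=0$, $rr=0$, and commutativity). Then for the plenary periods $q_i$ of the $h_i$: (a) if $\delta=0$ then $q_i\in\{1,\infty\}$ for all $i$; (b) if $\delta=1$ then $q_1\in\{1,2,\infty\}$ and $q_i\in\{1,\infty\}$ for $i\neq 1$.
   Context: An EACP is a commutative algebra with a basis $\{h_1,\dots,h_n,r\}$ such that $h_ir=rh_i=\sum_j a_{ij}h_j+b_ir$, $h_ih_j=0$, $rr=0$. For $x=\sum_i\alpha_ih_i+ar$, $h_i\prec x$ means $\alpha_i\ne0$. Plenary powers: $y^{[1]}=yy$, $y^{[m]}=y^{[m-1]}y^{[m-1]}$. The plenary period of $h_j$ is $q_j=\min\{m\in\mathbb N: h_j\prec (h_jr)^{[m]}\}$, and $q_j=\infty$ if this set is empty. *)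

theory Defs
  imports Main "HOL-Library.Extended_Nat"
begin

text \<open>Elements are represented by coordinates: a pair (alpha, a) stands for
  sum_{i=1..n} alpha i * h_i + a * r.  The structure constants are
  A i j (coefficient of h_j in h_i r) and B i (coefficient of r in h_i r).\<close>

type_synonym 'a eacp_elem = "(nat \<Rightarrow> 'a) \<times> 'a"

definition eacp_h :: "nat \<Rightarrow> 'a::field eacp_elem" where
  "eacp_h i = ((\<lambda>j. if j = i then 1 else 0), 0)"

definition eacp_r :: "'a::field eacp_elem" where
  "eacp_r = ((\<lambda>j. 0), 1)"

text \<open>Bilinear product determined by h_i r = r h_i = sum_j A i j h_j + B i r,
  h_i h_j = 0, r r = 0.\<close>
definition eacp_mult ::
  "nat \<Rightarrow> (nat \<Rightarrow> nat \<Rightarrow> 'a::field) \<Rightarrow> (nat \<Rightarrow> 'a) \<Rightarrow> 'a eacp_elem \<Rightarrow> 'a eacp_elem \<Rightarrow> 'a eacp_elem" where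
  "eacp_mult n A B x y =
     ((\<lambda>j. \<Sum>i\<in>{1..n}. (fst x i * snd y + snd x * fst y i) * A i j),
      (\<Sum>i\<in>{1..n}. (fst x i * snd y + snd x * fst y i) * B i))"

fun eacp_plenary ::
  "nat \<Rightarrow> (nat \<Rightarrow> nat \<Rightarrow> 'a::field) \<Rightarrow> (nat \<Rightarrow> 'a) \<Rightarrow> 'a eacp_elem \<Rightarrow> nat \<Rightarrow> 'a eacp_elem" where
  "eacp_plenary n A B y 0 = y"
| "eacp_plenary n A B y (Suc m) =
     eacp_mult n A B (eacp_plenary n A B y m) (eacp_plenary n A B y m)"

definition eacp_prec :: "nat \<Rightarrow> 'a::field eacp_elem \<Rightarrow> bool" where
  "eacp_prec i x \<longleftrightarrow> fst x i \<noteq> 0"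

definition plenary_period ::
  "nat \<Rightarrow> (nat \<Rightarrow> nat \<Rightarrow> 'a::field) \<Rightarrow> (nat \<Rightarrow> 'a) \<Rightarrow> nat \<Rightarrow> enat" where
  "plenary_period n A B j =
     (let P = (\<lambda>m. m \<ge> 1 \<and>
                 eacp_prec j (eacp_plenary n A B (eacp_mult n A B (eacp_h j) eacp_r) m))
      in if \<exists>m. P m then enat (LEAST m. P m) else \<infinity>)"

end

theory Submission
  imports Defs
begin

text \<open>Since \<open>h\<^sub>i h\<^sub>j = 0\<close>, the square of an element without \<open>r\<close>-component vanishes, so the
  plenary powers of \<open>y\<close> are \<open>0\<close> from the step after the first one lying in the span of the
  \<open>h\<^sub>i\<close>.  If \<open>h\<^sub>j r\<close> itself has no \<open>r\<close>-component, this gives \<open>q\<^sub>j = \<infinity>\<close>.  If \<open>r\<close> occurs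
  only in \<open>h\<^sub>1 r\<close>, the \<open>r\<close>-component of \<open>y y\<close> is a multiple of the \<open>h\<^sub>1\<close>-coordinate of \<open>y\<close>;
  so if \<open>(h\<^sub>1 r)^[1]\<close> has zero \<open>h\<^sub>1\<close>-coordinate, then \<open>(h\<^sub>1 r)^[2]\<close> has no \<open>r\<close>-component and
  all later plenary powers vanish, leaving \<open>q\<^sub>1 \<in> {1, 2, \<infinity>}\<close>.\<close>

lemma eacp_mult_self_eq_zero:
  "snd y = 0 \<Longrightarrow> eacp_mult n A B y y = ((\<lambda>j. 0), 0)"
  by (simp add: eacp_mult_def)

lemma snd_eacp_mult_self_eq_zero:
  assumes "\<forall>i\<in>{1..n}. fst y i = 0 \<or> B i = 0"
  shows "snd (eacp_mult n A B y y) = 0"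
  unfolding eacp_mult_def using assms by (auto intro!: sum.neutral)

lemma eacp_plenary_vanishes:
  assumes "snd (eacp_plenary n A B y m) = 0" and "m < k"
  shows "eacp_plenary n A B y k = ((\<lambda>j. 0), 0)"
  using \<open>m < k\<close>
proof (induction k)
  case (Suc k)
  then have "snd (eacp_plenary n A B y k) = 0"
    using assms(1) by (cases "m = k") auto
  then show ?case
    by (simp add: eacp_mult_self_eq_zero)
qed simp

lemma eacp_mult_h_r:
  assumes "j \<in> {1..n}"
  shows "eacp_mult n A B (eacp_h j) eacp_r = (A j, B j)"
proof -
  have pick: "(\<Sum>i\<in>{1..n}. (if i = j then 1 else 0) * c i) = c j" for c :: "nat \<Rightarrow> 'a"
    using assms by (simp add: if_distrib[where f = "\<lambda>x. x * _"] sum.delta cong: if_cong)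
  show ?thesis
    using pick[of "\<lambda>i. A i _"] pick[of B]
    by (simp add: eacp_mult_def eacp_h_def eacp_r_def fun_eq_iff)
qed

lemma plenary_period_mem_below:
  assumes "\<And>m. K \<le> m \<Longrightarrow>
      eacp_prec j (eacp_plenary n A B (eacp_mult n A B (eacp_h j) eacp_r) m) \<Longrightarrow>
      \<exists>k\<in>{1..<K}. eacp_prec j (eacp_plenary n A B (eacp_mult n A B (eacp_h j) eacp_r) k)"
  shows "plenary_period n A B j \<in> enat ` {1..<K} \<union> {\<infinity>}"
proof -
  define P where "P m \<longleftrightarrow>
      1 \<le> m \<and> eacp_prec j (eacp_plenary n A B (eacp_mult n A B (eacp_h j) eacp_r) m)" for m
  have period: "plenary_period n A B j = (if \<exists>m. P m then enat (LEAST m. P m) else \<infinity>)"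
    unfolding plenary_period_def P_def Let_def ..
  have "(LEAST m. P m) \<in> {1..<K}" if "P m" for m
  proof -
    have least: "P (LEAST m. P m)"
      using that by (rule LeastI)
    have "(LEAST m. P m) < K"
    proof (rule ccontr)
      assume "\<not> (LEAST m. P m) < K"
      then obtain k where "k \<in> {1..<K}" "P k"
        using assms[of "LEAST m. P m"] least unfolding P_def by auto
      then show False
        using Least_le[of P k] \<open>\<not> (LEAST m. P m) < K\<close> by simp
    qed
    then show ?thesis
      using least unfolding P_def by simp
  qed
  then show ?thesis
    unfolding period by auto
qed

theorem plenary_period_eq_infinity:
  assumes "j \<in> {1..n}" and "B j = 0"
  shows "plenary_period n A B j = \<infinity>"
proof -
  let ?x = "eacp_mult n A B (eacp_h j) eacp_r"
  have "snd (eacp_plenary n A B ?x 0) = 0"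
    using assms by (simp add: eacp_mult_h_r)
  then have "\<not> eacp_prec j (eacp_plenary n A B ?x m)" if "1 \<le> m" for m
    using eacp_plenary_vanishes[of n A B ?x 0 m] that by (simp add: eacp_prec_def)
  then show ?thesis
    using plenary_period_mem_below[of 1 j n A B] by simp
qed

theorem plenary_period_le_two:
  assumes "j \<in> {1..n}" and B_supp: "\<forall>i\<in>{1..n}. i \<noteq> j \<longrightarrow> B i = 0"
  shows "plenary_period n A B j \<in> {1, 2, \<infinity>}"
proof -
  let ?y = "eacp_plenary n A B (eacp_mult n A B (eacp_h j) eacp_r)"
  have "eacp_prec j (?y 1)" if "3 \<le> m" and "eacp_prec j (?y m)" for m
  proof (rule ccontr)
    assume "\<not> eacp_prec j (?y 1)"
    then have "snd (eacp_mult n A B (?y 1) (?y 1)) = 0"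
      using B_supp by (intro snd_eacp_mult_self_eq_zero) (auto simp: eacp_prec_def)
    then have "snd (?y 2) = 0"
      by (simp add: numeral_2_eq_2)
    then have "?y m = ((\<lambda>j. 0), 0)"
      using \<open>3 \<le> m\<close> by (intro eacp_plenary_vanishes[of n A B _ 2]) auto
    with \<open>eacp_prec j (?y m)\<close> show False
      by (simp add: eacp_prec_def)
  qed
  then have "plenary_period n A B j \<in> enat ` {1..<3} \<union> {\<infinity>}"
    by (intro plenary_period_mem_below bexI[of _ 1]) auto
  moreover have "{1..<3::nat} = {1, 2}"
    by auto
  ultimately show ?thesis
    by (auto simp: one_enat_def numeral_eq_enat)
qed

theorem corollary3p4:
  fixes n :: nat and A :: "nat \<Rightarrow> nat \<Rightarrow> 'a::field" and \<delta> :: 'a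
  assumes "\<delta> = 0 \<or> \<delta> = 1"
  defines "B \<equiv> (\<lambda>i. if i = 1 then \<delta> else 0)"
  shows "(\<delta> = 0 \<longrightarrow> (\<forall>i\<in>{1..n}. plenary_period n A B i \<in> {1, \<infinity>}))
       \<and> (\<delta> = 1 \<longrightarrow> (1 \<le> n \<longrightarrow> plenary_period n A B 1 \<in> {1, 2, \<infinity>})
                 \<and> (\<forall>i\<in>{1..n}. i \<noteq> 1 \<longrightarrow> plenary_period n A B i \<in> {1, \<infinity>}))"
proof (intro conjI impI ballI)
  fix i assume "\<delta> = 0" "i \<in> {1..n}"
  then show "plenary_period n A B i \<in> {1, \<infinity>}"
    by (simp add: plenary_period_eq_infinity B_def)
next
  assume "1 \<le> n"
  then show "plenary_period n A B 1 \<in> {1, 2, \<infinity>}"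
    by (intro plenary_period_le_two) (auto simp: B_def)
next
  fix i assume "i \<in> {1..n}" "i \<noteq> 1"
  then show "plenary_period n A B i \<in> {1, \<infinity>}"
    by (simp add: plenary_period_eq_infinity B_def)
qed

end
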